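(* There exists $c\in(0,1/64)$ such that for any $\delta>0$ and $A\ge4c\sqrt{\delta}$, for all $n$ large enough, \[ \mathbb{P}\bigl(|\mathrm{B}_{\delta n}|\le c\delta\sqrt n/A\bigr)\le\exp(-A\sqrt n), \] where $\mathrm{B}_t:=\{x\in\mathbb{Z}:\mathrm{T}(0,x)\le t\}$. Consequently, for any $\eta,A>0$ with $A\ge32c\eta$, for all $n$ large enough, \[ \mathbb{P}\Bigl(\mathrm{T}(0,\lfloor\eta\sqrt n\rfloor)\wedge\mathrm{T}(0,-\lfloor\eta\sqrt n\rfloor)\ge 2A\eta n/c\Bigr)\le\exp(-A\sqrt n). \]
   Context: Frog model on $\mathbb{Z}$: let $(S^x_n)_{n\ge 0}$, $x\in\mathbb{Z}$, be independent simple symmetric random walks on $\mathbb{Z}$ with $S^x_0=x$, under $\mathbb{P}$. For $x,y\in\mathbb{Z}$, $t(x,y):=\inf\{n\ge 0: S^x_n=y\}$ and $\mathrm{T}(x,y):=\inf\{\sum_{i=0}^{k-1}t(x_i,x_{i+1}) : k\ge 1,\ x_0,\dots,x_k\in\mathbb{Z},\ x_0=x,\ x_k=y\}$. $|\cdot|$ denotes cardinality. *)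

theory Defs
  imports "HOL-Probability.Probability"
begin

text \<open>Probability space: i.i.d. steps xi(x,k) uniform on {-1,1}, indexed by
  the walk label x :: int and the time k :: nat.\<close>

definition frog_space :: "((int \<times> nat) \<Rightarrow> int) measure" where
  "frog_space = PiM (UNIV :: (int \<times> nat) set) (\<lambda>_. measure_pmf (pmf_of_set {-1, 1::int}))"

definition S :: "int \<Rightarrow> nat \<Rightarrow> ((int \<times> nat) \<Rightarrow> int) \<Rightarrow> int" where
  "S x n \<omega> = x + (\<Sum>k<n. \<omega> (x, k))"

definition hit :: "int \<Rightarrow> int \<Rightarrow> ((int \<times> nat) \<Rightarrow> int) \<Rightarrow> enat" where
  "hit x y \<omega> = (if \<exists>n. S x n \<omega> = y then enat (LEAST n. S x n \<omega> = y) else \<infinity>)"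

definition T :: "int \<Rightarrow> int \<Rightarrow> ((int \<times> nat) \<Rightarrow> int) \<Rightarrow> enat" where
  "T x y \<omega> = (INF xs \<in> {xs. length xs \<ge> 2 \<and> hd xs = x \<and> last xs = y}.
                  \<Sum>i<length xs - 1. hit (xs ! i) (xs ! Suc i) \<omega>)"

definition B :: "real \<Rightarrow> ((int \<times> nat) \<Rightarrow> int) \<Rightarrow> int set" where
  "B t \<omega> = {x. ereal_of_enat (T 0 x \<omega>) \<le> ereal t}"

end

theory Submission
  imports Defs "HOL-Real_Asymp.Real_Asymp"
begin

text \<open>
  Walks move by \<open>\<plusminus>1\<close>, so \<open>T(0,\<cdot>)\<close> is monotone along both rays and every ball \<open>B\<^sub>t\<close> is an
  interval containing \<open>0\<close>. Suppose \<open>|B\<^sub>t| \<le> K\<close>. Either \<open>|B\<^bsub>t/2\<^esub>| \<le> K/2\<close>, or \<open>B\<^bsub>t/2\<^esub>\<close>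
  contains \<open>\<lfloor>K/4\<rfloor> + 1\<close> consecutive sites on one side of \<open>0\<close>. In the second case the walk of each
  of these sites stays inside \<open>B\<^sub>t\<close>, an interval of at most \<open>K\<close> sites, during \<open>t/2\<close> steps;
  cutting its path into blocks of \<open>M \<approx> 4K\<^sup>2/3\<close> steps, every block has displacement at most
  \<open>K\<close>. By the second and fourth moments of a sum of \<open>M\<close> signs this has probability at most
  \<open>47/48\<close>, independently over blocks and walks, which costs a factor \<open>exp (-\<gamma> t/K)\<close> with
  \<open>\<gamma> = 3/7168\<close>. Since \<open>t/K\<close> is unchanged by halving both, \<open>\<lceil>K\<rceil>\<close> iterations give
  \<open>P(|B\<^sub>t| \<le> K) \<le> 2(K+1) exp (-\<gamma> t/K)\<close> whenever \<open>8K\<^sup>2 \<le> t\<close>. The theorem follows with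
  \<open>c = \<gamma>/2\<close>: take \<open>t = \<delta>n\<close> and \<open>K = c\<delta>\<surd>n/A\<close> for the first claim; for the second, the
  event \<open>T(0,\<plusminus>m) \<ge> s\<close> confines \<open>B\<^bsub>s-1\<^esub>\<close> to the interval \<open>(-m, m)\<close>, so take
  \<open>t = s - 1\<close> and \<open>K = 2\<eta>\<surd>n\<close>.
\<close>

section \<open>Passage times and balls\<close>

definition unit_steps :: "((int \<times> nat) \<Rightarrow> int) set" where
  "unit_steps = {\<omega>. \<forall>i. \<omega> i \<in> {-1, 1}}"

fun path_time :: "((int \<times> nat) \<Rightarrow> int) \<Rightarrow> int list \<Rightarrow> enat" where
  "path_time \<omega> (a # b # xs) = hit a b \<omega> + path_time \<omega> (b # xs)"
| "path_time \<omega> _ = 0"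

definition paths :: "int \<Rightarrow> int \<Rightarrow> int list set" where
  "paths x y = {xs. length xs \<ge> 2 \<and> hd xs = x \<and> last xs = y}"

lemma sum_hit_eq_path_time: "(\<Sum>i<length xs - 1. hit (xs ! i) (xs ! Suc i) \<omega>) = path_time \<omega> xs"
proof (induction \<omega> xs rule: path_time.induct)
  case (1 \<omega> a b xs)
  have "(\<Sum>i<length (a # b # xs) - 1. hit ((a # b # xs) ! i) ((a # b # xs) ! Suc i) \<omega>)
      = hit a b \<omega> + (\<Sum>i<length (b # xs) - 1. hit ((b # xs) ! i) ((b # xs) ! Suc i) \<omega>)"
    by (simp add: sum.lessThan_Suc_shift del: sum.lessThan_Suc)
  with 1 show ?case by simp
qed auto

lemma T_eq_INF_path_time: "T x y \<omega> = (INF xs \<in> paths x y. path_time \<omega> xs)"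
  unfolding T_def paths_def sum_hit_eq_path_time ..

lemma T_le_path_time: "xs \<in> paths x y \<Longrightarrow> T x y \<omega> \<le> path_time \<omega> xs"
  unfolding T_eq_INF_path_time by (rule INF_lower)

lemma T_attained: "\<exists>xs\<in>paths x y. T x y \<omega> = path_time \<omega> xs"
proof -
  have "[x, y] \<in> paths x y" by (simp add: paths_def)
  then have "T x y \<omega> \<in> path_time \<omega> ` paths x y"
    unfolding T_eq_INF_path_time by (intro wellorder_InfI) blast
  then show ?thesis by auto
qed

lemma S_0 [simp]: "S x 0 \<omega> = x"
  by (simp add: S_def)

lemma S_Suc: "S x (Suc n) \<omega> = S x n \<omega> + \<omega> (x, n)"
  by (simp add: S_def)

lemma S_diff: "m \<le> n \<Longrightarrow> S x n \<omega> - S x m \<omega> = (\<Sum>k\<in>{m..<n}. \<omega> (x, k))"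
  by (simp add: S_def lessThan_atLeast0 sum.atLeastLessThan_concat[of 0 m n, symmetric])

lemma hit_le: "S x n \<omega> = y \<Longrightarrow> hit x y \<omega> \<le> enat n"
  unfolding hit_def by (auto intro: Least_le)

lemma S_at_hit: "hit x y \<omega> = enat n \<Longrightarrow> S x n \<omega> = y"
  unfolding hit_def by (auto split: if_splits intro: LeastI)

lemma hit_eq_enat_iff: "hit x y \<omega> = enat n \<longleftrightarrow> S x n \<omega> = y \<and> (\<forall>k<n. S x k \<omega> \<noteq> y)"
proof
  assume h: "hit x y \<omega> = enat n"
  have "\<not> S x k \<omega> = y" if "k < n" for k
    using hit_le[of x k \<omega> y] h that by auto
  with S_at_hit[OF h] show "S x n \<omega> = y \<and> (\<forall>k<n. S x k \<omega> \<noteq> y)" by blast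
next
  assume h: "S x n \<omega> = y \<and> (\<forall>k<n. S x k \<omega> \<noteq> y)"
  then have "(LEAST k. S x k \<omega> = y) = n"
    by (intro Least_equality) (auto simp: not_less[symmetric])
  with h show "hit x y \<omega> = enat n" unfolding hit_def by auto
qed

lemma hit_self: "hit x x \<omega> = 0"
  by (metis S_0 hit_le le_zero_eq zero_enat_def)

lemma T_le_hit: "T x y \<omega> \<le> hit x y \<omega>"
  using T_le_path_time[of "[x, y]" x y \<omega>] by (simp add: paths_def)

lemma T_self: "T x x \<omega> = 0"
  using T_le_hit[of x x \<omega>] by (simp add: hit_self)

lemma path_time_snoc: "xs \<noteq> [] \<Longrightarrow> path_time \<omega> (xs @ [z]) = path_time \<omega> xs + hit (last xs) z \<omega>"
  by (induction \<omega> xs rule: path_time.induct) (auto simp: add.assoc)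

lemma T_le_T_plus_hit: "T x z \<omega> \<le> T x y \<omega> + hit y z \<omega>"
proof -
  obtain xs where xs: "xs \<in> paths x y" "T x y \<omega> = path_time \<omega> xs"
    using T_attained by blast
  then have "xs \<noteq> []"
    by (auto simp: paths_def)
  with xs have "xs @ [z] \<in> paths x z"
    by (auto simp: paths_def)
  with xs \<open>xs \<noteq> []\<close> show ?thesis
    using T_le_path_time[of "xs @ [z]" x z \<omega>] by (simp add: path_time_snoc paths_def)
qed

lemma T_le_hit_plus_T: "T x z \<omega> \<le> hit x y \<omega> + T y z \<omega>"
proof -
  obtain xs where xs: "xs \<in> paths y z" "T y z \<omega> = path_time \<omega> xs"
    using T_attained by blast
  then obtain a xs' where xs_eq: "xs = y # a # xs'"
    by (cases xs; cases "tl xs") (auto simp: paths_def)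
  then have "x # xs \<in> paths x z"
    using xs by (auto simp: paths_def)
  with xs xs_eq show ?thesis
    using T_le_path_time[of "x # xs" x z \<omega>] by simp
qed

lemma abs_S_Suc_diff:
  assumes "\<omega> \<in> unit_steps"
  shows "\<bar>S x (Suc n) \<omega> - S x n \<omega>\<bar> = 1"
proof -
  have "\<omega> (x, n) \<in> {-1, 1}"
    using assms by (simp add: unit_steps_def)
  then show ?thesis
    by (auto simp: S_Suc)
qed

lemma abs_S_diff_le: "\<omega> \<in> unit_steps \<Longrightarrow> \<bar>S x n \<omega> - x\<bar> \<le> int n"
proof (induction n)
  case (Suc n)
  then show ?case using abs_S_Suc_diff[of \<omega> x n] by linarith
qed simp

lemma dist_le_hit:
  assumes "\<omega> \<in> unit_steps"
  shows "enat (nat \<bar>y - x\<bar>) \<le> hit x y \<omega>"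
proof (cases "hit x y \<omega>")
  case (enat n)
  with abs_S_diff_le[OF assms, of x n] show ?thesis
    by (simp add: S_at_hit nat_le_iff)
qed simp

lemma dist_le_path_time:
  "\<omega> \<in> unit_steps \<Longrightarrow> xs \<noteq> [] \<Longrightarrow> enat (nat \<bar>last xs - hd xs\<bar>) \<le> path_time \<omega> xs"
proof (induction \<omega> xs rule: path_time.induct)
  case (1 \<omega> a b xs)
  have "enat (nat \<bar>last (b # xs) - a\<bar>) \<le> enat (nat \<bar>b - a\<bar>) + enat (nat \<bar>last (b # xs) - b\<bar>)"
    by simp
  also have "\<dots> \<le> hit a b \<omega> + path_time \<omega> (b # xs)"
    using 1 dist_le_hit[of \<omega> b a] by (intro add_mono) auto
  finally show ?case by simp
qed (auto simp: zero_enat_def)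

lemma dist_le_T:
  assumes "\<omega> \<in> unit_steps"
  shows "enat (nat \<bar>y - x\<bar>) \<le> T x y \<omega>"
proof -
  obtain xs where xs: "xs \<in> paths x y" "T x y \<omega> = path_time \<omega> xs"
    using T_attained by blast
  then have "xs \<noteq> []"
    by (auto simp: paths_def)
  with xs dist_le_path_time[OF assms, of xs] show ?thesis
    by (simp add: paths_def)
qed

lemma int_discrete_ivt:
  fixes f :: "nat \<Rightarrow> int"
  assumes "\<And>k. k < n \<Longrightarrow> \<bar>f (Suc k) - f k\<bar> \<le> 1" and "f 0 \<le> z" and "z \<le> f n"
  shows "\<exists>k\<le>n. f k = z"
  using assms
proof (induction n)
  case (Suc n)
  show ?case
  proof (cases "z \<le> f n")
    case True
    have "\<exists>k\<le>n. f k = z"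
      by (rule Suc.IH) (use Suc.prems True in auto)
    then show ?thesis
      using le_SucI by blast
  next
    case False
    have "\<bar>f (Suc n) - f n\<bar> \<le> 1"
      using Suc.prems(1) by simp
    with False Suc.prems(3) have "f (Suc n) = z"
      by linarith
    then show ?thesis by blast
  qed
qed auto

lemma hit_between_le:
  assumes "\<omega> \<in> unit_steps" and "min x y \<le> z" and "z \<le> max x y"
  shows "hit x z \<omega> \<le> hit x y \<omega>"
proof (cases "hit x y \<omega>")
  case (enat n)
  have steps: "\<bar>S x (Suc k) \<omega> - S x k \<omega>\<bar> \<le> 1" for k
    using abs_S_Suc_diff[OF assms(1)] by simp
  have steps': "\<bar>- S x (Suc k) \<omega> - - S x k \<omega>\<bar> \<le> 1" for k
    using steps[of k] by linarith
  have "S x n \<omega> = y"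
    using enat by (rule S_at_hit)
  then have "\<exists>k\<le>n. S x k \<omega> = z"
  proof (cases "x \<le> y")
    case True
    with assms(2,3) \<open>S x n \<omega> = y\<close> show ?thesis
      using int_discrete_ivt[of n "\<lambda>k. S x k \<omega>" z] steps by simp
  next
    case False
    with assms(2,3) \<open>S x n \<omega> = y\<close> have "\<exists>k\<le>n. - S x k \<omega> = - z"
      using int_discrete_ivt[of n "\<lambda>k. - S x k \<omega>" "- z"] steps' by simp
    then show ?thesis by simp
  qed
  then obtain k where "k \<le> n" and "S x k \<omega> = z"
    by blast
  then have "hit x z \<omega> \<le> enat k"
    by (intro hit_le)
  with \<open>k \<le> n\<close> enat show ?thesis
    by (simp add: order_trans)
qed simp

lemma T_between_le_path_time:
  "\<omega> \<in> unit_steps \<Longrightarrow> length xs \<ge> 2 \<Longrightarrow> min (hd xs) (last xs) \<le> z \<Longrightarrow> z \<le> max (hd xs) (last xs)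
    \<Longrightarrow> T (hd xs) z \<omega> \<le> path_time \<omega> xs"
proof (induction \<omega> xs rule: path_time.induct)
  case (1 \<omega> a b xs)
  show ?case
  proof (cases "min a b \<le> z \<and> z \<le> max a b")
    case True
    then have "T a z \<omega> \<le> hit a b \<omega>"
      using T_le_hit[of a z \<omega>] hit_between_le[OF "1.prems"(1)] order_trans by blast
    then show ?thesis by (simp add: order_trans[OF _ add_increasing2])
  next
    case False
    then have "xs \<noteq> []" and "min b (last (b # xs)) \<le> z \<and> z \<le> max b (last (b # xs))"
      using "1.prems" by (auto simp: min_def max_def split: if_splits)
    then have "T b z \<omega> \<le> path_time \<omega> (b # xs)"
      using "1.IH" "1.prems"(1) by (simp add: Suc_le_eq)
    then show ?thesis
      using T_le_hit_plus_T[of a z \<omega> b] by (simp add: order_trans[OF _ add_left_mono])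
  qed
qed auto

lemma T_between_le:
  assumes "\<omega> \<in> unit_steps" and "min x y \<le> z" and "z \<le> max x y"
  shows "T x z \<omega> \<le> T x y \<omega>"
proof -
  obtain xs where "xs \<in> paths x y" "T x y \<omega> = path_time \<omega> xs"
    using T_attained by blast
  with assms show ?thesis
    using T_between_le_path_time[of \<omega> xs z] by (auto simp: paths_def)
qed

lemma zero_mem_B: "0 \<le> t \<Longrightarrow> 0 \<in> B t \<omega>"
  by (simp add: B_def T_self zero_ereal_def)

lemma abs_le_of_mem_B:
  assumes "\<omega> \<in> unit_steps" and "x \<in> B t \<omega>"
  shows "\<bar>x\<bar> \<le> t"
proof -
  have "ereal \<bar>x\<bar> = ereal_of_enat (enat (nat \<bar>x\<bar>))"
    by simp
  also have "\<dots> \<le> ereal_of_enat (T 0 x \<omega>)"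
    using dist_le_T[OF assms(1), of x 0] by (simp only: ereal_of_enat_le_iff) simp
  also have "\<dots> \<le> ereal t"
    using assms(2) by (simp add: B_def)
  finally show ?thesis by simp
qed

lemma finite_B:
  assumes "\<omega> \<in> unit_steps"
  shows "finite (B t \<omega>)"
proof (rule finite_subset)
  show "B t \<omega> \<subseteq> {-\<lceil>t\<rceil>..\<lceil>t\<rceil>}"
  proof
    fix x assume "x \<in> B t \<omega>"
    with abs_le_of_mem_B[OF assms] have "\<bar>x\<bar> \<le> t" .
    then show "x \<in> {-\<lceil>t\<rceil>..\<lceil>t\<rceil>}"
      unfolding atLeastAtMost_iff by linarith
  qed
qed simp

lemma mem_B_between:
  assumes "\<omega> \<in> unit_steps" and "x \<in> B t \<omega>" and "min 0 x \<le> y" and "y \<le> max 0 x"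
  shows "y \<in> B t \<omega>"
proof -
  have "ereal_of_enat (T 0 y \<omega>) \<le> ereal_of_enat (T 0 x \<omega>)"
    using T_between_le[OF assms(1,3,4)] by simp
  also have "\<dots> \<le> ereal t"
    using assms(2) by (simp add: B_def)
  finally show ?thesis
    by (simp add: B_def)
qed

lemma S_mem_B:
  assumes "y \<in> B s \<omega>" and "s + real n \<le> t"
  shows "S y n \<omega> \<in> B t \<omega>"
proof -
  have "T 0 (S y n \<omega>) \<omega> \<le> T 0 y \<omega> + hit y (S y n \<omega>) \<omega>"
    by (rule T_le_T_plus_hit)
  also have "\<dots> \<le> T 0 y \<omega> + enat n"
    by (intro add_left_mono hit_le) (rule refl)
  finally have "ereal_of_enat (T 0 (S y n \<omega>) \<omega>) \<le> ereal_of_enat (T 0 y \<omega> + enat n)"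
    by simp
  also have "\<dots> = ereal_of_enat (T 0 y \<omega>) + ereal (real n)"
    by (simp add: ereal_of_enat_add)
  also have "\<dots> \<le> ereal s + ereal (real n)"
    using assms(1) by (intro add_right_mono) (simp add: B_def)
  also have "\<dots> \<le> ereal t"
    using assms(2) by simp
  finally show ?thesis
    by (simp add: B_def)
qed

lemma atLeastAtMost_subset_B:
  assumes "\<omega> \<in> unit_steps" and "x \<in> B t \<omega>" and "y \<in> B t \<omega>"
  shows "{x..y} \<subseteq> B t \<omega>"
proof
  fix z assume "z \<in> {x..y}"
  then show "z \<in> B t \<omega>"
    using mem_B_between[OF assms(1,2), of z] mem_B_between[OF assms(1,3), of z]
    by (cases "0 \<le> z") auto
qed

lemma dist_less_card_B:
  assumes "\<omega> \<in> unit_steps" and "x \<in> B t \<omega>" and "y \<in> B t \<omega>"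
  shows "\<bar>x - y\<bar> < int (card (B t \<omega>))"
proof -
  have "card {min x y..max x y} \<le> card (B t \<omega>)"
    using assms by (intro card_mono finite_B atLeastAtMost_subset_B) (auto simp: min_def max_def)
  then show ?thesis by (simp add: min_def max_def split: if_splits)
qed

lemma card_B_le_if_not_mem:
  assumes "\<omega> \<in> unit_steps" and "0 \<le> m" and "m \<notin> B t \<omega>" and "- m \<notin> B t \<omega>"
  shows "int (card (B t \<omega>)) \<le> 2 * m"
proof -
  have "B t \<omega> \<subseteq> {-m<..<m}"
  proof
    fix x assume x: "x \<in> B t \<omega>"
    have False if "m \<le> x \<or> x \<le> - m"
      using that assms mem_B_between[OF assms(1) x, of m] mem_B_between[OF assms(1) x, of "- m"]
      by auto
    then show "x \<in> {-m<..<m}" by force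
  qed
  then have "card (B t \<omega>) \<le> nat (2 * m - 1)"
    using card_mono[of "{-m<..<m}" "B t \<omega>"] by simp
  with assms(2) show ?thesis
    by (cases "0 \<le> 2 * m - 1") auto
qed

lemma B_contains_segment:
  assumes "\<omega> \<in> unit_steps" and "0 \<le> m" and "2 * m < int (card (B t \<omega>))"
  shows "{0..m} \<subseteq> B t \<omega> \<or> {-m..0} \<subseteq> B t \<omega>"
proof -
  have "m \<in> B t \<omega> \<or> - m \<in> B t \<omega>"
  proof (rule ccontr)
    assume "\<not> (m \<in> B t \<omega> \<or> - m \<in> B t \<omega>)"
    then have "int (card (B t \<omega>)) \<le> 2 * m"
      using card_B_le_if_not_mem[OF assms(1,2)] by blast
    with assms(2,3) show False by linarith
  qed
  then show ?thesis
  proof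
    assume "m \<in> B t \<omega>"
    from mem_B_between[OF assms(1) this] assms(2) show ?thesis by auto
  next
    assume "- m \<in> B t \<omega>"
    from mem_B_between[OF assms(1) this] assms(2) show ?thesis by auto
  qed
qed

lemma card_B_le_if_T_ge:
  assumes "\<omega> \<in> unit_steps" and "0 \<le> m" and "t < s"
    and "ereal s \<le> ereal_of_enat (T 0 m \<omega>)" and "ereal s \<le> ereal_of_enat (T 0 (- m) \<omega>)"
  shows "int (card (B t \<omega>)) \<le> 2 * m"
proof (rule card_B_le_if_not_mem[OF assms(1,2)])
  have not_mem: "x \<notin> B t \<omega>" if "ereal s \<le> ereal_of_enat (T 0 x \<omega>)" for x
  proof
    assume "x \<in> B t \<omega>"
    then have "ereal_of_enat (T 0 x \<omega>) \<le> ereal t"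
      by (simp add: B_def)
    with that have "ereal s \<le> ereal t"
      by (rule order_trans)
    with assms(3) show False
      by simp
  qed
  from not_mem[OF assms(4)] show "m \<notin> B t \<omega>" .
  from not_mem[OF assms(5)] show "- m \<notin> B t \<omega>" .
qed

section \<open>The product of coin flips\<close>

abbreviation coin :: "int measure" where
  "coin \<equiv> measure_pmf (pmf_of_set {-1, 1})"

abbreviation sign_vectors :: "(int \<times> nat) set \<Rightarrow> ((int \<times> nat) \<Rightarrow> int) set" where
  "sign_vectors J \<equiv> PiE J (\<lambda>_. {-1, 1})"

lemma frog_space_eq_PiM: "frog_space = PiM UNIV (\<lambda>_. coin)"
  by (simp add: frog_space_def)

interpretation coins: product_prob_space "\<lambda>_::int \<times> nat. coin" UNIV
  by unfold_locales

lemma space_frog_space: "space frog_space = UNIV"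
  by (simp add: frog_space_def space_PiM)

interpretation frog: prob_space frog_space
  unfolding frog_space_eq_PiM by (rule coins.P.prob_space_axioms)

lemma sets_PiM_coin:
  assumes "finite K"
  shows "sets (PiM K (\<lambda>_. coin)) = Pow (space (PiM K (\<lambda>_. coin)))"
proof (intro equalityI subsetI)
  fix A assume "A \<in> Pow (space (PiM K (\<lambda>_. coin)))"
  then have A: "A \<subseteq> PiE K (\<lambda>_. UNIV)"
    by (simp add: space_PiM)
  have "PiE K (\<lambda>i. {g i}) = {g}" if "g \<in> A" for g
    using that A by (intro PiE_singleton) (auto simp: PiE_iff)
  then have "A = (\<Union>g\<in>A. PiE K (\<lambda>i. {g i}))"
    by auto
  also have "\<dots> \<in> sets (PiM K (\<lambda>_. coin))"
    using assms A
    by (intro sets.countable_UN' countable_subset[OF A] countable_PiE) (auto intro!: sets_PiM_I_finite)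
  finally show "A \<in> sets (PiM K (\<lambda>_. coin))" .
qed (use sets.sets_into_space in blast)

lemma restrict_event_sets:
  assumes "finite K"
  shows "{\<omega> \<in> space frog_space. Q (restrict \<omega> K)} \<in> sets frog_space"
proof -
  have "(\<lambda>\<omega>. restrict \<omega> K) \<in> measurable frog_space (PiM K (\<lambda>_. coin))"
    unfolding frog_space_eq_PiM by (rule measurable_restrict_subset) simp
  moreover have "{g \<in> space (PiM K (\<lambda>_. coin)). Q g} \<in> sets (PiM K (\<lambda>_. coin))"
    using sets_PiM_coin[OF assms] by auto
  ultimately have "(\<lambda>\<omega>. restrict \<omega> K) -` {g \<in> space (PiM K (\<lambda>_. coin)). Q g} \<inter> space frog_space
      \<in> sets frog_space"
    by (rule measurable_sets)
  also have "(\<lambda>\<omega>. restrict \<omega> K) -` {g \<in> space (PiM K (\<lambda>_. coin)). Q g} \<inter> space frog_space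
      = {\<omega> \<in> space frog_space. Q (restrict \<omega> K)}"
    by (auto simp: space_PiM)
  finally show ?thesis .
qed

lemma unit_steps_sets: "unit_steps \<in> sets frog_space"
proof -
  have "{\<omega> \<in> space frog_space. restrict \<omega> {i} i \<in> {-1, 1}} \<in> sets frog_space" for i
    by (rule restrict_event_sets) simp
  then have "(\<Inter>i. {\<omega> \<in> space frog_space. restrict \<omega> {i} i \<in> {-1, 1}}) \<in> sets frog_space"
    by (intro sets.countable_INT') auto
  also have "(\<Inter>i. {\<omega> \<in> space frog_space. restrict \<omega> {i} i \<in> {-1, 1}}) = unit_steps"
    by (auto simp: unit_steps_def space_frog_space)
  finally show ?thesis .
qed

lemma AE_unit_steps: "AE \<omega> in frog_space. \<omega> \<in> unit_steps"
proof -
  have "AE \<omega> in frog_space. \<omega> i \<in> {-1, 1}" for i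
    unfolding frog_space_eq_PiM
    by (rule coins.AE_component) (auto simp: AE_measure_pmf_iff)
  then show ?thesis
    by (simp add: unit_steps_def AE_all_countable)
qed

lemma measure_mono_on_unit_steps:
  assumes "E \<inter> unit_steps \<subseteq> F" and "F \<in> sets frog_space"
  shows "measure frog_space E \<le> measure frog_space F"
  using AE_unit_steps assms by (intro frog.finite_measure_mono_AE) auto

lemma measure_cylinder:
  assumes "finite J" and "f \<in> sign_vectors J"
  shows "measure frog_space {\<omega> \<in> space frog_space. restrict \<omega> J = f} = (1/2) ^ card J"
proof -
  have "{\<omega> \<in> space frog_space. restrict \<omega> J = f}
      = {\<omega> \<in> space (PiM UNIV (\<lambda>_. coin)). \<forall>i\<in>J. \<omega> i \<in> {f i}}"
    using assms(2) by (auto simp: frog_space_eq_PiM PiE_iff extensional_def fun_eq_iff)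
  moreover have "emeasure (PiM UNIV (\<lambda>_. coin)) {\<omega> \<in> space (PiM UNIV (\<lambda>_. coin)). \<forall>i\<in>J. \<omega> i \<in> {f i}}
      = (\<Prod>i\<in>J. emeasure coin {f i})"
    using assms(1) by (intro coins.emeasure_PiM_Collect) auto
  moreover have "(\<Prod>i\<in>J. emeasure coin {f i}) = (\<Prod>i\<in>J. ennreal (1/2))"
    using assms(2) by (intro prod.cong refl) (auto simp: emeasure_pmf_single pmf_of_set PiE_iff)
  moreover have "(\<Prod>i\<in>J. ennreal (1/2)) = ennreal ((1/2) ^ card J)"
    by (subst prod_constant, subst ennreal_power) auto
  ultimately have "emeasure frog_space {\<omega> \<in> space frog_space. restrict \<omega> J = f} = ennreal ((1/2) ^ card J)"
    by (simp add: frog_space_eq_PiM)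
  then show ?thesis
    by (simp add: frog.emeasure_eq_measure)
qed

lemma measure_restrict_event:
  assumes "finite J"
  shows "measure frog_space {\<omega> \<in> space frog_space. Q (restrict \<omega> J)}
       = card {f \<in> sign_vectors J. Q f} / 2 ^ card J"
proof -
  let ?E = "{\<omega> \<in> space frog_space. Q (restrict \<omega> J)}"
  let ?G = "{f \<in> sign_vectors J. Q f}"
  let ?C = "\<lambda>f. {\<omega> \<in> space frog_space. restrict \<omega> J = f}"
  have finite_G: "finite ?G"
    using assms by (simp add: finite_PiE)
  have C_sets: "?C f \<in> sets frog_space" for f
    using restrict_event_sets[OF assms, of "\<lambda>g. g = f"] .
  have union_sets: "(\<Union>f\<in>?G. ?C f) \<in> sets frog_space"
    using finite_G C_sets by (intro sets.finite_UN) auto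
  have "?E \<inter> unit_steps \<subseteq> (\<Union>f\<in>?G. ?C f)"
  proof
    fix \<omega> assume \<omega>: "\<omega> \<in> ?E \<inter> unit_steps"
    then have "\<omega> i \<in> {-1, 1}" for i
      by (cases i) (simp add: unit_steps_def)
    then have "restrict \<omega> J \<in> sign_vectors J"
      by (simp add: restrict_PiE_iff)
    with \<omega> show "\<omega> \<in> (\<Union>f\<in>?G. ?C f)"
      by auto
  qed
  then have "measure frog_space ?E \<le> measure frog_space (\<Union>f\<in>?G. ?C f)"
    using union_sets by (rule measure_mono_on_unit_steps)
  moreover have "measure frog_space (\<Union>f\<in>?G. ?C f) \<le> measure frog_space ?E"
    using restrict_event_sets[OF assms] by (intro frog.finite_measure_mono) auto
  ultimately have "measure frog_space ?E = measure frog_space (\<Union>f\<in>?G. ?C f)"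
    by (rule antisym)
  also have "\<dots> = (\<Sum>f\<in>?G. measure frog_space (?C f))"
    using finite_G C_sets
    by (intro frog.finite_measure_finite_Union) (auto simp: disjoint_family_on_def)
  also have "\<dots> = (\<Sum>f\<in>?G. (1/2) ^ card J)"
    using assms by (intro sum.cong refl measure_cylinder) auto
  finally show ?thesis
    by (simp add: field_simps)
qed

section \<open>Anti-concentration of sums of signs\<close>

abbreviation sum_signs :: "(int \<times> nat) set \<Rightarrow> ((int \<times> nat) \<Rightarrow> int) \<Rightarrow> real" where
  "sum_signs J f \<equiv> (\<Sum>i\<in>J. real_of_int (f i))"

lemma sum_signs_restrict: "sum_signs J (restrict \<omega> J) = sum_signs J \<omega>"
  by (simp cong: sum.cong)

lemma sum_sign_vectors_insert:
  fixes h :: "real \<Rightarrow> real"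
  assumes "finite J" and "x \<notin> J"
  shows "(\<Sum>f\<in>sign_vectors (insert x J). h (sum_signs (insert x J) f))
       = (\<Sum>f\<in>sign_vectors J. h (sum_signs J f + 1) + h (sum_signs J f - 1))"
proof -
  have sum_upd: "sum_signs (insert x J) (g(x := y)) = real_of_int y + sum_signs J g" for g y
  proof -
    have "sum_signs J (g(x := y)) = sum_signs J g"
      using assms(2) by (intro sum.cong) auto
    with assms show ?thesis
      by (simp add: sum.insert)
  qed
  have "(\<Sum>f\<in>sign_vectors (insert x J). h (sum_signs (insert x J) f))
      = (\<Sum>(y, g)\<in>{-1, 1} \<times> sign_vectors J. h (sum_signs (insert x J) (g(x := y))))"
    unfolding PiE_insert_eq
    by (subst sum.reindex[OF inj_combinator[OF assms(2)]]) (simp add: case_prod_beta comp_def)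
  also have "\<dots> = (\<Sum>(y, g)\<in>{-1, 1} \<times> sign_vectors J. h (real_of_int y + sum_signs J g))"
    by (intro sum.cong refl) (clarsimp simp only: sum_upd)
  also have "\<dots> = (\<Sum>y\<in>{-1::int, 1}. \<Sum>g\<in>sign_vectors J. h (real_of_int y + sum_signs J g))"
    by (rule sum.cartesian_product[symmetric])
  finally show ?thesis
    by (simp add: sum.distrib add.commute)
qed

lemma sum_sign_vectors_power2:
  "finite J \<Longrightarrow> (\<Sum>f\<in>sign_vectors J. (sum_signs J f)^2) = real (card J) * 2 ^ card J"
proof (induction J rule: finite_induct)
  case (insert x J)
  have "(\<Sum>f\<in>sign_vectors (insert x J). (sum_signs (insert x J) f)^2)
      = (\<Sum>f\<in>sign_vectors J. (sum_signs J f + 1)^2 + (sum_signs J f - 1)^2)"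
    by (rule sum_sign_vectors_insert[OF insert(1,2)])
  also have "\<dots> = (\<Sum>f\<in>sign_vectors J. 2 * (sum_signs J f)^2 + 2)"
    by (intro sum.cong refl) (simp add: power2_eq_square algebra_simps)
  also have "\<dots> = 2 * (\<Sum>f\<in>sign_vectors J. (sum_signs J f)^2) + 2 * real (card (sign_vectors J))"
    by (simp add: sum.distrib sum_distrib_left)
  also have "\<dots> = real (card (insert x J)) * 2 ^ card (insert x J)"
    using insert by (simp add: card_PiE algebra_simps)
  finally show ?case .
qed simp

lemma sum_sign_vectors_power4:
  "finite J \<Longrightarrow> (\<Sum>f\<in>sign_vectors J. (sum_signs J f)^4)
     = (3 * real (card J)^2 - 2 * real (card J)) * 2 ^ card J"
proof (induction J rule: finite_induct)
  case (insert x J)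
  have "(\<Sum>f\<in>sign_vectors (insert x J). (sum_signs (insert x J) f)^4)
      = (\<Sum>f\<in>sign_vectors J. (sum_signs J f + 1)^4 + (sum_signs J f - 1)^4)"
    by (rule sum_sign_vectors_insert[OF insert(1,2)])
  also have "\<dots> = (\<Sum>f\<in>sign_vectors J. 2 * (sum_signs J f)^4 + 12 * (sum_signs J f)^2 + 2)"
    by (intro sum.cong refl) (simp add: power4_eq_xxxx power2_eq_square algebra_simps)
  also have "\<dots> = 2 * (\<Sum>f\<in>sign_vectors J. (sum_signs J f)^4)
      + 12 * (\<Sum>f\<in>sign_vectors J. (sum_signs J f)^2) + 2 * real (card (sign_vectors J))"
    by (simp add: sum.distrib sum_distrib_left)
  also have "\<dots> = (3 * real (card (insert x J))^2 - 2 * real (card (insert x J))) * 2 ^ card (insert x J)"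
    unfolding insert.IH sum_sign_vectors_power2[OF insert(1)]
    using insert by (simp add: card_PiE power2_eq_square algebra_simps)
  finally show ?case .
qed simp

text \<open>For \<open>|s| > a\<close> this is AM-GM. Summed over all sign vectors, with \<open>l = 1/(12M)\<close>, it bounds
  the second moment \<open>M\<close> by the fourth moment and the number of sums exceeding \<open>a\<close>.\<close>

lemma power2_le_truncated_bound:
  fixes s a l :: real
  assumes "l > 0" and "0 \<le> a"
  shows "s^2 \<le> a^2 + (l * s^4 + (if \<bar>s\<bar> \<le> a then 0 else 1) / l) / 2"
proof (cases "\<bar>s\<bar> \<le> a")
  case True
  then have "s^2 \<le> a^2"
    by (metis abs_le_square_iff abs_of_nonneg assms(2))
  moreover have "0 \<le> l * s^4"
    using assms(1) by simp
  ultimately show ?thesis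
    using True by simp
next
  case False
  have "0 \<le> (l * s^2 - 1)^2 / l"
    using assms by simp
  also have "(l * s^2 - 1)^2 / l = l * s^4 - 2 * s^2 + 1 / l"
    using assms by (simp add: field_simps power2_eq_square power4_eq_xxxx)
  finally have "s^2 \<le> (l * s^4 + 1 / l) / 2"
    by simp
  moreover have "(if \<bar>s\<bar> \<le> a then 0 else 1) / l = 1 / l"
    using False by simp
  ultimately show ?thesis
    using zero_le_power2[of a] by (simp only:)
qed

lemma sum_large_sum_signs:
  assumes "finite J"
  shows "(\<Sum>f\<in>sign_vectors J. if \<bar>sum_signs J f\<bar> \<le> a then 0 else 1 :: real)
    = 2 ^ card J - real (card {f \<in> sign_vectors J. \<bar>sum_signs J f\<bar> \<le> a})"
proof -
  have "(\<Sum>f\<in>sign_vectors J. if \<bar>sum_signs J f\<bar> \<le> a then 1 else 0 :: real)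
      = real (card {f \<in> sign_vectors J. \<bar>sum_signs J f\<bar> \<le> a})"
    using assms by (simp add: sum.If_cases finite_PiE Collect_conj_eq Int_commute)
  moreover have "(\<Sum>f\<in>sign_vectors J. if \<bar>sum_signs J f\<bar> \<le> a then 0 else 1 :: real)
      + (\<Sum>f\<in>sign_vectors J. if \<bar>sum_signs J f\<bar> \<le> a then 1 else 0 :: real) = 2 ^ card J"
    using assms by (subst sum.distrib[symmetric]) (simp add: card_PiE if_distrib cong: if_cong)
  ultimately show ?thesis
    by linarith
qed

lemma card_small_sum_signs:
  assumes "finite J" and "card J > 0" and "0 \<le> a" and "a^2 \<le> 3 * real (card J) / 4"
  shows "real (card {f \<in> sign_vectors J. \<bar>sum_signs J f\<bar> \<le> a}) \<le> 47/48 * 2 ^ card J"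
proof -
  define M where "M = real (card J)"
  define l where "l = 1 / (12 * M)"
  define X where "X = (2::real) ^ card J"
  define N where "N = real (card {f \<in> sign_vectors J. \<bar>sum_signs J f\<bar> \<le> a})"
  let ?large = "\<lambda>f. if \<bar>sum_signs J f\<bar> \<le> a then 0 else 1 :: real"
  have M: "M > 0" and l: "l > 0" and X: "X > 0"
    using assms(2) by (simp_all add: M_def l_def X_def)
  have card_sign_vectors: "real (card (sign_vectors J)) = X"
    using assms(1) by (simp add: card_PiE X_def)
  have large: "(\<Sum>f\<in>sign_vectors J. ?large f) = X - N"
    using sum_large_sum_signs[OF assms(1), of a] by (simp add: X_def N_def)
  have "M * X = (\<Sum>f\<in>sign_vectors J. (sum_signs J f)^2)"
    using sum_sign_vectors_power2[OF assms(1)] by (simp add: M_def X_def)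
  also have "\<dots> \<le> (\<Sum>f\<in>sign_vectors J. a^2 + (l * (sum_signs J f)^4 + ?large f / l) / 2)"
    by (intro sum_mono power2_le_truncated_bound l assms(3))
  also have "\<dots> = (\<Sum>f\<in>sign_vectors J. a^2 + l / 2 * (sum_signs J f)^4 + ?large f / (2 * l))"
    by (intro sum.cong refl) (simp add: add_divide_distrib)
  also have "\<dots> = a^2 * X + l / 2 * (\<Sum>f\<in>sign_vectors J. (sum_signs J f)^4)
      + (\<Sum>f\<in>sign_vectors J. ?large f) / (2 * l)"
    by (simp only: sum.distrib sum_distrib_left[symmetric] sum_divide_distrib[symmetric]
        sum_constant card_sign_vectors) simp
  also have "\<dots> = a^2 * X + l / 2 * ((3 * M^2 - 2 * M) * X) + (X - N) / (2 * l)"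
    using sum_sign_vectors_power4[OF assms(1)] by (simp add: large M_def X_def)
  finally have bound: "M * X \<le> a^2 * X + l / 2 * ((3 * M^2 - 2 * M) * X) + (X - N) / (2 * l)" .
  have "a^2 * X \<le> 3 * M / 4 * X"
    using assms(4) X by (intro mult_right_mono) (auto simp: M_def)
  moreover have "l / 2 * ((3 * M^2 - 2 * M) * X) \<le> M / 8 * X"
    using M X by (simp add: l_def field_simps power2_eq_square)
  moreover have "(X - N) / (2 * l) = 6 * M * (X - N)"
    using M by (simp add: l_def field_simps)
  ultimately have "M * (X / 8) \<le> M * (6 * (X - N))"
    using bound by (simp add: algebra_simps)
  then have "N \<le> 47/48 * X"
    using M by simp
  then show ?thesis
    by (simp add: N_def X_def)
qed

lemma prob_small_sum_signs:
  assumes "finite J" and "card J > 0" and "0 \<le> a" and "a^2 \<le> 3 * real (card J) / 4"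
  shows "measure frog_space {\<omega> \<in> space frog_space. \<bar>sum_signs J \<omega>\<bar> \<le> a} \<le> 47/48"
proof -
  have "measure frog_space {\<omega> \<in> space frog_space. \<bar>sum_signs J \<omega>\<bar> \<le> a}
      = real (card {f \<in> sign_vectors J. \<bar>sum_signs J f\<bar> \<le> a}) / 2 ^ card J"
    using measure_restrict_event[OF assms(1), of "\<lambda>g. \<bar>sum_signs J g\<bar> \<le> a"]
    by (simp add: sum_signs_restrict)
  also have "\<dots> \<le> 47/48"
    using card_small_sum_signs[OF assms] by (simp add: divide_le_eq)
  finally show ?thesis .
qed

lemma indep_coordinates: "frog.indep_vars (\<lambda>_. coin) (\<lambda>i \<omega>. \<omega> i) UNIV"
proof (subst frog.indep_vars_iff_distr_eq_PiM)
  show "(\<lambda>\<omega>. \<omega> i) \<in> measurable frog_space coin" for i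
    unfolding frog_space_eq_PiM by (rule measurable_component_singleton) simp
  have "distr frog_space coin (\<lambda>\<omega>. \<omega> i) = coin" for i
    unfolding frog_space_eq_PiM by (rule coins.PiM_component) simp
  then show "distr frog_space (PiM UNIV (\<lambda>_. coin)) (\<lambda>x. restrict (\<lambda>i. x i) UNIV)
      = PiM UNIV (\<lambda>i. distr frog_space coin (\<lambda>\<omega>. \<omega> i))"
    by (simp add: frog_space_eq_PiM[symmetric] restrict_UNIV distr_id)
qed simp

lemma measure_Inter_restrict_events:
  assumes "finite L" and "L \<noteq> {}" and "\<And>j. finite (K j)" and "disjoint_family_on K L"
  shows "measure frog_space (\<Inter>j\<in>L. {\<omega> \<in> space frog_space. Q j (restrict \<omega> (K j))})
       = (\<Prod>j\<in>L. measure frog_space {\<omega> \<in> space frog_space. Q j (restrict \<omega> (K j))})"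
proof -
  define A where "A j = {g \<in> space (PiM (K j) (\<lambda>_. coin)). Q j g}" for j
  have events: "(\<lambda>\<omega>. restrict \<omega> (K j)) -` A j \<inter> space frog_space
      = {\<omega> \<in> space frog_space. Q j (restrict \<omega> (K j))}" for j
    by (auto simp: A_def space_PiM)
  have "frog.indep_vars (\<lambda>j. PiM (K j) (\<lambda>_. coin)) (\<lambda>j \<omega>. restrict \<omega> (K j)) L"
    using frog.indep_vars_restrict[OF indep_coordinates _ assms(4)] by simp
  then have "measure frog_space (\<Inter>j\<in>L. (\<lambda>\<omega>. restrict \<omega> (K j)) -` A j \<inter> space frog_space)
      = (\<Prod>j\<in>L. measure frog_space ((\<lambda>\<omega>. restrict \<omega> (K j)) -` A j \<inter> space frog_space))"
    by (rule frog.indep_varsD_finite[OF _ assms(2,1)]) (auto simp: A_def sets_PiM_coin[OF assms(3)])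
  then show ?thesis
    by (simp only: events)
qed

lemma one_minus_power_le_exp:
  assumes "a \<le> 1"
  shows "(1 - a) ^ n \<le> exp (- a * real n)"
proof -
  have "(1 - a) ^ n \<le> exp (- a) ^ n"
    using assms exp_ge_add_one_self[of "- a"] by (intro power_mono) auto
  also have "\<dots> = exp (- a * real n)"
    by (metis exp_of_nat_mult mult.commute)
  finally show ?thesis .
qed

definition confined_blocks :: "int set \<Rightarrow> nat \<Rightarrow> nat \<Rightarrow> real \<Rightarrow> ((int \<times> nat) \<Rightarrow> int) set" where
  "confined_blocks Y M nb a = {\<omega> \<in> space frog_space. \<forall>y\<in>Y. \<forall>b<nb.
      \<bar>\<Sum>k\<in>{b * M..<(b + 1) * M}. real_of_int (\<omega> (y, k))\<bar> \<le> a}"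

lemma confined_blocks_sets:
  assumes "finite Y"
  shows "confined_blocks Y M nb a \<in> sets frog_space"
proof -
  let ?K = "Y \<times> {..<nb * M}"
  have "(\<Sum>k\<in>{b * M..<(b + 1) * M}. real_of_int (restrict \<omega> ?K (y, k)))
      = (\<Sum>k\<in>{b * M..<(b + 1) * M}. real_of_int (\<omega> (y, k)))" if "y \<in> Y" "b < nb" for \<omega> y b
  proof (intro sum.cong refl)
    fix k assume "k \<in> {b * M..<(b + 1) * M}"
    moreover have "(b + 1) * M \<le> nb * M"
      using that by (intro mult_right_mono) auto
    ultimately show "real_of_int (restrict \<omega> ?K (y, k)) = real_of_int (\<omega> (y, k))"
      using that by auto
  qed
  then have "confined_blocks Y M nb a = {\<omega> \<in> space frog_space. \<forall>y\<in>Y. \<forall>b<nb.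
      \<bar>\<Sum>k\<in>{b * M..<(b + 1) * M}. real_of_int (restrict \<omega> ?K (y, k))\<bar> \<le> a}"
    by (auto simp: confined_blocks_def)
  also have "\<dots> \<in> sets frog_space"
    using assms by (intro restrict_event_sets) simp
  finally show ?thesis .
qed

lemma disjoint_family_on_blocks:
  fixes M :: nat
  assumes "0 < M"
  shows "disjoint_family_on (\<lambda>(y, b). {y} \<times> {b * M..<(b + 1) * M}) I"
proof -
  have block_index: "k div M = b" if "k \<in> {b * M..<(b + 1) * M}" for k b
    using that by (intro div_nat_eqI) (auto simp: algebra_simps)
  show ?thesis
    unfolding disjoint_family_on_def
  proof (intro ballI impI)
    fix i j :: "'a \<times> nat" assume "i \<noteq> j"
    obtain y b y' b' where ij: "i = (y, b)" "j = (y', b')"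
      by (cases i; cases j)
    show "(case i of (y, b) \<Rightarrow> {y} \<times> {b * M..<(b + 1) * M})
        \<inter> (case j of (y, b) \<Rightarrow> {y} \<times> {b * M..<(b + 1) * M}) = {}"
    proof (rule ccontr)
      assume "(case i of (y, b) \<Rightarrow> {y} \<times> {b * M..<(b + 1) * M})
          \<inter> (case j of (y, b) \<Rightarrow> {y} \<times> {b * M..<(b + 1) * M}) \<noteq> {}"
      then obtain z where "z \<in> {y} \<times> {b * M..<(b + 1) * M}" and "z \<in> {y'} \<times> {b' * M..<(b' + 1) * M}"
        using ij by auto
      then have "y = y'" and "snd z \<in> {b * M..<(b + 1) * M}" and "snd z \<in> {b' * M..<(b' + 1) * M}"
        by auto
      with block_index[of "snd z" b] block_index[of "snd z" b'] ij \<open>i \<noteq> j\<close> show False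
        by simp
    qed
  qed
qed

lemma sum_signs_block: "sum_signs ({y} \<times> I) \<omega> = (\<Sum>k\<in>I. real_of_int (\<omega> (y, k)))"
proof -
  have "{y} \<times> I = Pair y ` I"
    by auto
  then show ?thesis
    by (simp add: sum.reindex inj_on_def)
qed

lemma measure_confined_blocks_le:
  assumes "finite Y" and "M > 0" and "0 \<le> a" and "a^2 \<le> 3 * real M / 4"
  shows "measure frog_space (confined_blocks Y M nb a) \<le> exp (- real (card Y * nb) / 48)"
proof (cases "Y = {} \<or> nb = 0")
  case True
  then have "confined_blocks Y M nb a = space frog_space"
    by (auto simp: confined_blocks_def)
  with True show ?thesis
    by auto
next
  case False
  define block :: "int \<times> nat \<Rightarrow> (int \<times> nat) set"
    where "block = (\<lambda>(y, b). {y} \<times> {b * M..<(b + 1) * M})"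
  define small where
    "small j = {\<omega> \<in> space frog_space. \<bar>sum_signs (block j) (restrict \<omega> (block j))\<bar> \<le> a}" for j
  have "confined_blocks Y M nb a = (\<Inter>j\<in>Y \<times> {..<nb}. small j)"
    using False by (auto simp: confined_blocks_def small_def block_def sum_signs_restrict sum_signs_block)
  also have "measure frog_space \<dots> = (\<Prod>j\<in>Y \<times> {..<nb}. measure frog_space (small j))"
    unfolding small_def using assms(1) False disjoint_family_on_blocks[OF assms(2)]
    by (intro measure_Inter_restrict_events) (auto simp: block_def split: prod.split)
  also have "\<dots> \<le> (\<Prod>j\<in>Y \<times> {..<nb}. 1 - 1/48)"
  proof (rule prod_mono)
    fix j assume "j \<in> Y \<times> {..<nb}"
    have "finite (block j)" and "card (block j) = M"
      by (simp_all add: block_def card_cartesian_product_singleton split: prod.split)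
    then have "measure frog_space (small j) \<le> 47/48"
      unfolding small_def sum_signs_restrict using assms(2-4) by (intro prob_small_sum_signs) auto
    then show "0 \<le> measure frog_space (small j) \<and> measure frog_space (small j) \<le> 1 - 1/48"
      by simp
  qed
  also have "\<dots> = (1 - 1/48) ^ (card Y * nb)"
    by (simp add: card_cartesian_product)
  also have "\<dots> \<le> exp (- real (card Y * nb) / 48)"
    using one_minus_power_le_exp[of "1/48" "card Y * nb"] by simp
  finally show ?thesis .
qed

section \<open>Measurability of passage-time events\<close>

lemma hit_eq_enat_sets: "{\<omega> \<in> space frog_space. hit x y \<omega> = enat n} \<in> sets frog_space"
proof -
  have "S x k (restrict \<omega> ({x} \<times> {..<n})) = S x k \<omega>" if "k \<le> n" for \<omega> k
    using that by (auto simp: S_def intro: sum.cong)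
  then have "{\<omega> \<in> space frog_space. hit x y \<omega> = enat n}
      = {\<omega> \<in> space frog_space. (\<lambda>g. S x n g = y \<and> (\<forall>k<n. S x k g \<noteq> y)) (restrict \<omega> ({x} \<times> {..<n}))}"
    by (auto simp: hit_eq_enat_iff)
  also have "\<dots> \<in> sets frog_space"
    by (rule restrict_event_sets) simp
  finally show ?thesis .
qed

lemma enat_add_le_enat_iff: "a + b \<le> enat m \<longleftrightarrow> (\<exists>i\<le>m. a = enat i \<and> b \<le> enat (m - i))"
  by (cases a; cases b) auto

lemma path_time_le_sets: "{\<omega> \<in> space frog_space. path_time \<omega> xs \<le> enat m} \<in> sets frog_space"
proof (induction xs arbitrary: m rule: induct_list012)
  case (3 a b xs)
  have "{\<omega> \<in> space frog_space. path_time \<omega> (a # b # xs) \<le> enat m}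
      = (\<Union>i\<le>m. {\<omega> \<in> space frog_space. hit a b \<omega> = enat i}
           \<inter> {\<omega> \<in> space frog_space. path_time \<omega> (b # xs) \<le> enat (m - i)})"
    by (auto simp: enat_add_le_enat_iff)
  also have "\<dots> \<in> sets frog_space"
    using "3.IH"(2) hit_eq_enat_sets by (intro sets.finite_UN sets.Int) auto
  finally show ?case .
qed (simp_all add: zero_enat_def)

lemma T_le_sets: "{\<omega> \<in> space frog_space. T x y \<omega> \<le> enat m} \<in> sets frog_space"
proof -
  have "{\<omega> \<in> space frog_space. T x y \<omega> \<le> enat m}
      = (\<Union>xs\<in>paths x y. {\<omega> \<in> space frog_space. path_time \<omega> xs \<le> enat m})"
  proof (intro set_eqI iffI)
    fix \<omega> assume "\<omega> \<in> {\<omega> \<in> space frog_space. T x y \<omega> \<le> enat m}"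
    moreover obtain xs where "xs \<in> paths x y" and "T x y \<omega> = path_time \<omega> xs"
      using T_attained by blast
    ultimately show "\<omega> \<in> (\<Union>xs\<in>paths x y. {\<omega> \<in> space frog_space. path_time \<omega> xs \<le> enat m})"
      by auto
  next
    fix \<omega> assume "\<omega> \<in> (\<Union>xs\<in>paths x y. {\<omega> \<in> space frog_space. path_time \<omega> xs \<le> enat m})"
    then obtain xs where "xs \<in> paths x y" "\<omega> \<in> space frog_space" "path_time \<omega> xs \<le> enat m"
      by blast
    then show "\<omega> \<in> {\<omega> \<in> space frog_space. T x y \<omega> \<le> enat m}"
      using T_le_path_time[of xs x y \<omega>] by simp
  qed
  also have "\<dots> \<in> sets frog_space"
    by (intro sets.countable_UN' countableI_type) (auto intro: path_time_le_sets)
  finally show ?thesis .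
qed

lemma T_eq_sets: "{\<omega> \<in> space frog_space. T x y \<omega> = e} \<in> sets frog_space"
proof (cases e)
  case (enat m)
  have "T x y \<omega> = enat m \<longleftrightarrow> T x y \<omega> \<le> enat m \<and> (\<forall>j<m. \<not> T x y \<omega> \<le> enat j)" for \<omega>
    by (cases "T x y \<omega>") (simp_all, metis le_antisym not_le order_refl)
  then have "{\<omega> \<in> space frog_space. T x y \<omega> = enat m}
      = {\<omega> \<in> space frog_space. T x y \<omega> \<le> enat m} - (\<Union>j<m. {\<omega> \<in> space frog_space. T x y \<omega> \<le> enat j})"
    by auto
  then show ?thesis
    using T_le_sets enat by (simp add: sets.Diff sets.finite_UN)
next
  case infinity
  have "T x y \<omega> = \<infinity> \<longleftrightarrow> \<not> (\<exists>m. T x y \<omega> \<le> enat m)" for \<omega>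
    by (cases "T x y \<omega>") auto
  then have "{\<omega> \<in> space frog_space. T x y \<omega> = \<infinity>}
      = space frog_space - (\<Union>m. {\<omega> \<in> space frog_space. T x y \<omega> \<le> enat m})"
    by auto
  then show ?thesis
    using T_le_sets infinity by (simp add: sets.compl_sets sets.countable_UN)
qed

lemma T_pred_sets: "{\<omega> \<in> space frog_space. P (T x y \<omega>)} \<in> sets frog_space"
proof -
  have "{\<omega> \<in> space frog_space. P (T x y \<omega>)} = (\<Union>e\<in>{e. P e}. {\<omega> \<in> space frog_space. T x y \<omega> = e})"
    by auto
  also have "\<dots> \<in> sets frog_space"
    by (intro sets.countable_UN' countableI_type) (auto intro: T_eq_sets)
  finally show ?thesis .
qed

lemma ereal_of_enat_min: "ereal_of_enat (min a b) = min (ereal_of_enat a) (ereal_of_enat b)"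
  by (simp add: min_def)

lemma T_min_ge_sets:
  "{\<omega> \<in> space frog_space. ereal s \<le> ereal_of_enat (min (T 0 x \<omega>) (T 0 y \<omega>))} \<in> sets frog_space"
proof -
  have "{\<omega> \<in> space frog_space. ereal s \<le> ereal_of_enat (min (T 0 x \<omega>) (T 0 y \<omega>))}
      = {\<omega> \<in> space frog_space. ereal s \<le> ereal_of_enat (T 0 x \<omega>)}
        \<inter> {\<omega> \<in> space frog_space. ereal s \<le> ereal_of_enat (T 0 y \<omega>)}"
    by (auto simp: ereal_of_enat_min)
  then show ?thesis
    using T_pred_sets by simp
qed

lemma card_le_sets:
  fixes F :: "'a \<Rightarrow> 'b::countable set"
  assumes "\<And>x. {\<omega> \<in> space M. x \<in> F \<omega>} \<in> sets M"
  shows "{\<omega> \<in> space M. real (card (F \<omega>)) \<le> K} \<in> sets M"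
proof -
  have eq_sets: "{\<omega> \<in> space M. F \<omega> = A} \<in> sets M" for A
  proof -
    have "{\<omega> \<in> space M. F \<omega> = A} = (\<Inter>x. {\<omega> \<in> space M. x \<in> F \<omega> \<longleftrightarrow> x \<in> A})"
      by auto
    also have "\<dots> \<in> sets M"
      using assms sets.compl_sets[OF assms]
      by (intro sets.countable_INT') (auto simp: set_diff_eq cong: conj_cong)
    finally show ?thesis .
  qed
  have finite_sets: "{\<omega> \<in> space M. finite (F \<omega>) \<and> Q (F \<omega>)} \<in> sets M" for Q
  proof -
    have "{\<omega> \<in> space M. finite (F \<omega>) \<and> Q (F \<omega>)} = (\<Union>A\<in>{A. finite A \<and> Q A}. {\<omega> \<in> space M. F \<omega> = A})"
      by auto
    also have "\<dots> \<in> sets M"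
      using eq_sets
      by (intro sets.countable_UN' countable_subset[OF _ countable_Collect_finite]) auto
    finally show ?thesis .
  qed
  have "real (card A) \<le> K \<longleftrightarrow> finite A \<and> real (card A) \<le> K \<or> \<not> finite A \<and> 0 \<le> K" for A :: "'b set"
    by (cases "finite A") auto
  then have "{\<omega> \<in> space M. real (card (F \<omega>)) \<le> K}
      = {\<omega> \<in> space M. finite (F \<omega>) \<and> real (card (F \<omega>)) \<le> K}
        \<union> (if 0 \<le> K then space M - {\<omega> \<in> space M. finite (F \<omega>)} else {})"
    by auto
  then show ?thesis
    using finite_sets[of "\<lambda>A. real (card A) \<le> K"] finite_sets[of "\<lambda>_. True", simplified]
    by (cases "0 \<le> K") (simp_all add: sets.Un sets.compl_sets)
qed

lemma card_B_le_sets: "{\<omega> \<in> space frog_space. real (card (B t \<omega>)) \<le> K} \<in> sets frog_space"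
  by (rule card_le_sets) (simp only: B_def mem_Collect_eq, rule T_pred_sets)

section \<open>The halving recursion\<close>

definition decay_rate :: real where
  "decay_rate = 3 / 7168"

lemma real_div_ge_half:
  fixes L M :: nat
  assumes "0 < M" and "M \<le> L"
  shows "real L / (2 * real M) \<le> real (L div M)"
proof -
  have "0 < L div M"
    using assms by (simp add: div_greater_zero_iff)
  then have "M \<le> L div M * M"
    by simp
  moreover have "L = L div M * M + L mod M" and "L mod M < M"
    using assms(1) by simp_all
  ultimately have "L \<le> 2 * (L div M) * M"
    by linarith
  then have "real L \<le> 2 * real (L div M) * real M"
    by (metis of_nat_le_iff of_nat_mult of_nat_numeral)
  with assms(1) show ?thesis
    by (simp add: divide_le_eq mult_ac)
qed

lemma block_count_ge:
  fixes K t :: real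
  assumes "1 \<le> K" and "8 * K^2 \<le> t"
  shows "decay_rate * t / K
    \<le> real (nat (\<lfloor>K / 4\<rfloor> + 1) * (nat \<lfloor>t / 2\<rfloor> div nat \<lceil>4 * K^2 / 3\<rceil>)) / 48"
proof -
  define M where "M = nat \<lceil>4 * K^2 / 3\<rceil>"
  define L where "L = nat \<lfloor>t / 2\<rfloor>"
  have K2: "1 \<le> K^2"
    using assms(1) by (simp add: one_le_power)
  have segment: "K / 4 \<le> real (nat (\<lfloor>K / 4\<rfloor> + 1))"
    using assms(1) by linarith
  have "real M = real_of_int \<lceil>4 * K^2 / 3\<rceil>"
    using K2 by (simp add: M_def)
  then have M: "0 < M" "real M \<le> 7 * K^2 / 3"
    using assms(1) K2 by (simp add: M_def, linarith)
  have "0 \<le> t"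
    using assms(2) K2 by linarith
  then have "real L = real_of_int \<lfloor>t / 2\<rfloor>"
    by (simp add: L_def)
  then have L: "3 * t / 8 \<le> real L"
    using assms K2 by linarith
  then have "M \<le> L"
    using M(2) assms(2) by (simp flip: of_nat_le_iff)
  have "9 * t / (112 * K^2) = (3 * t / 8) / (2 * (7 * K^2 / 3))"
    by (simp add: field_simps)
  also have "\<dots> \<le> real L / (2 * real M)"
    using L M K2 assms(2) by (intro frac_le) auto
  also have "\<dots> \<le> real (L div M)"
    using M(1) \<open>M \<le> L\<close> by (rule real_div_ge_half)
  finally have blocks: "9 * t / (112 * K^2) \<le> real (L div M)" .
  have "decay_rate * t / K = K / 4 * (9 * t / (112 * K^2)) / 48"
    using assms(1) by (simp add: decay_rate_def field_simps power2_eq_square)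
  also have "\<dots> \<le> real (nat (\<lfloor>K / 4\<rfloor> + 1)) * real (L div M) / 48"
    using segment blocks assms K2 \<open>0 \<le> t\<close> by (intro divide_right_mono mult_mono) auto
  finally show ?thesis
    by (simp add: L_def M_def)
qed

text \<open>The event \<open>|B\<^sub>t| \<le> K\<close> restricted to \<^const>\<open>unit_steps\<close>, where the deterministic facts about
  balls apply; the restriction only removes a null set.\<close>

definition small_ball :: "real \<Rightarrow> real \<Rightarrow> ((int \<times> nat) \<Rightarrow> int) set" where
  "small_ball t K = {\<omega> \<in> unit_steps. real (card (B t \<omega>)) \<le> K}"

lemma small_ball_sets: "small_ball t K \<in> sets frog_space"
proof -
  have "small_ball t K = unit_steps \<inter> {\<omega> \<in> space frog_space. real (card (B t \<omega>)) \<le> K}"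
    by (auto simp: small_ball_def space_frog_space)
  then show ?thesis
    using unit_steps_sets card_B_le_sets by simp
qed

lemma small_ball_empty:
  assumes "K < 1" and "0 \<le> t"
  shows "small_ball t K = {}"
proof -
  have "1 \<le> card (B t \<omega>)" if "\<omega> \<in> unit_steps" for \<omega>
    using zero_mem_B[OF assms(2)] finite_B[OF that] by (simp add: Suc_le_eq card_gt_0_iff) blast
  with assms(1) show ?thesis
    by (force simp: small_ball_def)
qed

lemma small_ball_subset_confined_blocks:
  assumes "\<omega> \<in> small_ball t K" and "Y \<subseteq> B s \<omega>" and "s + real (nb * M) \<le> t"
  shows "\<omega> \<in> confined_blocks Y M nb K"
proof -
  have \<omega>: "\<omega> \<in> unit_steps" "real (card (B t \<omega>)) \<le> K"
    using assms(1) by (auto simp: small_ball_def)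
  have "\<bar>\<Sum>k\<in>{b * M..<(b + 1) * M}. real_of_int (\<omega> (y, k))\<bar> \<le> K" if "y \<in> Y" and "b < nb" for y b
  proof -
    have "real (b * M) \<le> real (nb * M)" and "real ((b + 1) * M) \<le> real (nb * M)"
      using that(2) by (simp_all only: of_nat_le_iff) (intro mult_le_mono1; simp)+
    then have "S y (b * M) \<omega> \<in> B t \<omega>" and "S y ((b + 1) * M) \<omega> \<in> B t \<omega>"
      using assms(2,3) that(1) by (auto intro!: S_mem_B[of y s])
    then have "\<bar>S y ((b + 1) * M) \<omega> - S y (b * M) \<omega>\<bar> < int (card (B t \<omega>))"
      by (intro dist_less_card_B[OF \<omega>(1)])
    moreover have "(\<Sum>k\<in>{b * M..<(b + 1) * M}. real_of_int (\<omega> (y, k)))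
        = real_of_int (S y ((b + 1) * M) \<omega> - S y (b * M) \<omega>)"
      by (simp add: S_diff)
    ultimately show ?thesis
      using \<omega>(2) by linarith
  qed
  then show ?thesis
    by (simp add: confined_blocks_def space_frog_space)
qed

lemma small_ball_halving_cover:
  assumes "0 \<le> m" and "real_of_int m \<le> K / 4" and "t / 2 + real (nb * M) \<le> t"
  shows "small_ball t K
    \<subseteq> small_ball (t / 2) (K / 2) \<union> confined_blocks {0..m} M nb K \<union> confined_blocks {-m..0} M nb K"
proof
  fix \<omega> assume \<omega>: "\<omega> \<in> small_ball t K"
  show "\<omega> \<in> small_ball (t / 2) (K / 2) \<union> confined_blocks {0..m} M nb K \<union> confined_blocks {-m..0} M nb K"
  proof (cases "real (card (B (t / 2) \<omega>)) \<le> K / 2")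
    case True
    with \<omega> show ?thesis
      by (simp add: small_ball_def)
  next
    case False
    with assms(2) have "real_of_int (2 * m) < real_of_int (int (card (B (t / 2) \<omega>)))"
      by simp
    then have "2 * m < int (card (B (t / 2) \<omega>))"
      by (simp only: of_int_less_iff)
    moreover have "\<omega> \<in> unit_steps"
      using \<omega> by (simp add: small_ball_def)
    ultimately have "{0..m} \<subseteq> B (t / 2) \<omega> \<or> {-m..0} \<subseteq> B (t / 2) \<omega>"
      using assms(1) by (intro B_contains_segment)
    then show ?thesis
      using small_ball_subset_confined_blocks[OF \<omega> _ assms(3)] by blast
  qed
qed

lemma measure_small_ball_halving:
  assumes "1 \<le> K" and "8 * K^2 \<le> t"
  shows "measure frog_space (small_ball t K)
    \<le> measure frog_space (small_ball (t / 2) (K / 2)) + 2 * exp (- (decay_rate * t / K))"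
proof -
  define m where "m = \<lfloor>K / 4\<rfloor>"
  define M where "M = nat \<lceil>4 * K^2 / 3\<rceil>"
  define nb where "nb = nat \<lfloor>t / 2\<rfloor> div M"
  have K2: "1 \<le> K^2"
    using assms(1) by (simp add: one_le_power)
  have m: "0 \<le> m" "real_of_int m \<le> K / 4"
    using assms(1) by (simp_all add: m_def) linarith
  have "real M = real_of_int \<lceil>4 * K^2 / 3\<rceil>"
    using K2 by (simp add: M_def)
  then have M: "0 < M" "K^2 \<le> 3 * real M / 4"
    using assms(1) K2 by (simp add: M_def, linarith)
  have "real (nb * M) \<le> real (nat \<lfloor>t / 2\<rfloor>)"
    unfolding nb_def of_nat_le_iff by (rule div_times_less_eq_dividend)
  then have nb: "t / 2 + real (nb * M) \<le> t"
    using assms K2 by linarith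
  have blocks: "measure frog_space (confined_blocks Y M nb K) \<le> exp (- (decay_rate * t / K))"
    if "Y = {0..m} \<or> Y = {-m..0}" for Y
  proof -
    have "card Y = nat (m + 1)"
      using that by auto
    then have "measure frog_space (confined_blocks Y M nb K) \<le> exp (- real (nat (m + 1) * nb) / 48)"
      using measure_confined_blocks_le[of Y M K nb] that M assms(1) by auto
    also have "\<dots> \<le> exp (- (decay_rate * t / K))"
      using block_count_ge[OF assms] unfolding m_def M_def nb_def
      by (intro exp_le_cancel_iff[THEN iffD2]) linarith
    finally show ?thesis .
  qed
  have "measure frog_space (small_ball t K) \<le> measure frog_space
      (small_ball (t / 2) (K / 2) \<union> confined_blocks {0..m} M nb K \<union> confined_blocks {-m..0} M nb K)"
    using small_ball_halving_cover[OF m nb]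
    by (intro frog.finite_measure_mono sets.Un small_ball_sets confined_blocks_sets) auto
  also have "\<dots> \<le> measure frog_space (small_ball (t / 2) (K / 2) \<union> confined_blocks {0..m} M nb K)
      + measure frog_space (confined_blocks {-m..0} M nb K)"
    by (intro measure_Un_le sets.Un small_ball_sets confined_blocks_sets) auto
  also have "\<dots> \<le> measure frog_space (small_ball (t / 2) (K / 2))
      + measure frog_space (confined_blocks {0..m} M nb K) + measure frog_space (confined_blocks {-m..0} M nb K)"
    by (intro add_right_mono measure_Un_le small_ball_sets confined_blocks_sets) auto
  finally show ?thesis
    using blocks[of "{0..m}"] blocks[of "{-m..0}"] by simp
qed

lemma measure_small_ball_iterate:
  assumes "K < 2 ^ N" and "0 < K" and "8 * K^2 \<le> t"
  shows "measure frog_space (small_ball t K) \<le> 2 * real N * exp (- (decay_rate * t / K))"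
  using assms
proof (induction N arbitrary: t K)
  case 0
  moreover have "0 \<le> t"
    using "0.prems"(3) zero_le_power2[of K] by linarith
  ultimately have "small_ball t K = {}"
    by (intro small_ball_empty) auto
  then show ?case
    by simp
next
  case (Suc N)
  have t: "0 \<le> t"
    using Suc.prems(3) zero_le_power2[of K] by linarith
  show ?case
  proof (cases "K < 1")
    case True
    then show ?thesis
      using small_ball_empty[OF True t] by simp
  next
    case False
    have "(K / 2)^2 = K^2 / 4"
      by (simp add: power_divide)
    then have "8 * (K / 2)^2 \<le> t / 2"
      using Suc.prems(3) zero_le_power2[of K] by (simp only:)
    then have "measure frog_space (small_ball (t / 2) (K / 2))
        \<le> 2 * real N * exp (- (decay_rate * (t / 2) / (K / 2)))"
      using Suc.prems(1,2) by (intro Suc.IH) auto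
    then show ?thesis
      using measure_small_ball_halving[of K t] False Suc.prems(3) by (simp add: algebra_simps)
  qed
qed

lemma measure_card_B_le:
  assumes "0 < K" and "8 * K^2 \<le> t"
  shows "measure frog_space {\<omega> \<in> space frog_space. real (card (B t \<omega>)) \<le> K}
    \<le> 2 * (K + 1) * exp (- (decay_rate * t / K))"
proof -
  define N where "N = nat \<lceil>K\<rceil>"
  have N: "K \<le> real N" "real N \<le> K + 1"
    using assms(1) by (simp_all add: N_def)
  have "real N < 2 ^ N"
    using of_nat_less_iff[of N "2 ^ N"] less_exp[of N] by simp
  have "measure frog_space {\<omega> \<in> space frog_space. real (card (B t \<omega>)) \<le> K}
      \<le> measure frog_space (small_ball t K)"
    using small_ball_sets by (intro measure_mono_on_unit_steps) (auto simp: small_ball_def)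
  also have "\<dots> \<le> 2 * real N * exp (- (decay_rate * t / K))"
    using N(1) \<open>real N < 2 ^ N\<close> assms by (intro measure_small_ball_iterate) linarith+
  also have "\<dots> \<le> 2 * (K + 1) * exp (- (decay_rate * t / K))"
    using N(2) by simp
  finally show ?thesis .
qed

lemma eventually_measure_card_B_le:
  fixes K t :: "nat \<Rightarrow> real"
  assumes "\<forall>\<^sub>F n in sequentially. 0 < K n \<and> 8 * (K n)^2 \<le> t n"
    and "((\<lambda>n. (K n + 1) * exp (- (decay_rate * t n / K n)) / exp (- A * sqrt (real n))) \<longlongrightarrow> 0)
      sequentially"
  shows "\<forall>\<^sub>F n in sequentially.
    measure frog_space {\<omega> \<in> space frog_space. real (card (B (t n) \<omega>)) \<le> K n} \<le> exp (- A * sqrt (real n))"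
proof -
  have "\<forall>\<^sub>F n in sequentially.
      (K n + 1) * exp (- (decay_rate * t n / K n)) / exp (- A * sqrt (real n)) < 1/2"
    by (rule order_tendstoD(2)[OF assms(2)]) simp
  with assms(1) show ?thesis
  proof eventually_elim
    case (elim n)
    let ?e = "exp (- A * sqrt (real n))"
    have "measure frog_space {\<omega> \<in> space frog_space. real (card (B (t n) \<omega>)) \<le> K n}
        \<le> 2 * (K n + 1) * exp (- (decay_rate * t n / K n))"
      using elim(1) by (intro measure_card_B_le) auto
    also have "\<dots> = 2 * ((K n + 1) * exp (- (decay_rate * t n / K n)) / ?e) * ?e"
      by simp
    also have "\<dots> \<le> 1 * ?e"
      using elim(2) by (intro mult_right_mono) auto
    finally show ?case
      by simp
  qed
qed

lemma eventually_measure_card_B_small: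
  fixes \<delta> A :: real
  assumes "\<delta> > 0" and "A \<ge> 4 * (decay_rate / 2) * sqrt \<delta>"
  shows "\<forall>\<^sub>F n in sequentially.
    {\<omega> \<in> space frog_space. real (card (B (\<delta> * real n) \<omega>)) \<le> decay_rate / 2 * \<delta> * sqrt (real n) / A}
      \<in> sets frog_space \<and>
    measure frog_space
      {\<omega> \<in> space frog_space. real (card (B (\<delta> * real n) \<omega>)) \<le> decay_rate / 2 * \<delta> * sqrt (real n) / A}
      \<le> exp (- A * sqrt (real n))"
proof -
  let ?K = "\<lambda>n. decay_rate / 2 * \<delta> * sqrt (real n) / A"
  have "0 < 4 * (decay_rate / 2) * sqrt \<delta>"
    using assms(1) by (simp add: decay_rate_def)
  with assms(2) have A: "A > 0"
    by linarith
  have "16 * (decay_rate / 2)^2 * \<delta> = (4 * (decay_rate / 2) * sqrt \<delta>)^2"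
    using assms(1) by (simp add: power_mult_distrib power2_eq_square)
  also have "\<dots> \<le> A^2"
    using assms(2) \<open>0 < 4 * (decay_rate / 2) * sqrt \<delta>\<close> by (intro power_mono) auto
  finally have A2: "16 * (decay_rate / 2)^2 * \<delta> \<le> A^2" .
  have "\<forall>\<^sub>F n in sequentially. 0 < ?K n \<and> 8 * (?K n)^2 \<le> \<delta> * real n"
    using eventually_ge_at_top[of "1::nat"]
  proof eventually_elim
    case (elim n)
    have "8 * (?K n)^2 = 8 * (decay_rate / 2)^2 * \<delta> / A^2 * (\<delta> * real n)"
      by (simp add: power_mult_distrib power_divide power2_eq_square field_simps)
    also have "\<dots> \<le> \<delta> * real n"
    proof (rule mult_left_le_one_le)
      have "0 \<le> (decay_rate / 2)^2 * \<delta>"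
        using assms(1) by simp
      with A2 have "8 * (decay_rate / 2)^2 * \<delta> \<le> A^2"
        by linarith
      with A show "8 * (decay_rate / 2)^2 * \<delta> / A^2 \<le> 1"
        by simp
    qed (use assms(1) in auto)
    finally show ?case
      using A assms(1) elim by (simp add: decay_rate_def)
  qed
  moreover have "((\<lambda>n. (?K n + 1) * exp (- (decay_rate * (\<delta> * real n) / ?K n)) / exp (- A * sqrt (real n)))
      \<longlongrightarrow> 0) sequentially"
  proof (rule Lim_transform_eventually)
    show "((\<lambda>n. (?K n + 1) * exp (- A * sqrt (real n))) \<longlongrightarrow> 0) sequentially"
      using A assms(1) unfolding decay_rate_def by real_asymp
    show "\<forall>\<^sub>F n in sequentially. (?K n + 1) * exp (- A * sqrt (real n))
        = (?K n + 1) * exp (- (decay_rate * (\<delta> * real n) / ?K n)) / exp (- A * sqrt (real n))"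
      using eventually_gt_at_top[of "0::nat"]
    proof eventually_elim
      case (elim n)
      have "sqrt (real n) * sqrt (real n) = real n"
        by simp
      then have exponent: "decay_rate * (\<delta> * real n) / ?K n = 2 * A * sqrt (real n)"
        using A assms(1) elim by (simp add: decay_rate_def field_simps)
      have "exp (- (decay_rate * (\<delta> * real n) / ?K n)) / exp (- A * sqrt (real n))
          = exp (- A * sqrt (real n))"
        unfolding exponent by (simp add: exp_diff[symmetric] algebra_simps)
      then show ?case
        by (metis times_divide_eq_right)
    qed
  qed
  ultimately show ?thesis
    using card_B_le_sets eventually_measure_card_B_le[where K = ?K and t = "\<lambda>n. \<delta> * real n"] by simp
qed

lemma eventually_measure_T_large:
  fixes \<eta> A :: real
  assumes "\<eta> > 0" and "A > 0" and "A \<ge> 32 * (decay_rate / 2) * \<eta>"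
  shows "\<forall>\<^sub>F n in sequentially.
    {\<omega> \<in> space frog_space.
       ereal_of_enat (min (T 0 \<lfloor>\<eta> * sqrt (real n)\<rfloor> \<omega>) (T 0 (- \<lfloor>\<eta> * sqrt (real n)\<rfloor>) \<omega>))
         \<ge> ereal (2 * A * \<eta> * real n / (decay_rate / 2))} \<in> sets frog_space \<and>
    measure frog_space
      {\<omega> \<in> space frog_space.
       ereal_of_enat (min (T 0 \<lfloor>\<eta> * sqrt (real n)\<rfloor> \<omega>) (T 0 (- \<lfloor>\<eta> * sqrt (real n)\<rfloor>) \<omega>))
         \<ge> ereal (2 * A * \<eta> * real n / (decay_rate / 2))}
      \<le> exp (- A * sqrt (real n))"
proof -
  let ?s = "\<lambda>n. 2 * A * \<eta> * real n / (decay_rate / 2)"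
  let ?m = "\<lambda>n. \<lfloor>\<eta> * sqrt (real n)\<rfloor>"
  let ?K = "\<lambda>n. 2 * \<eta> * sqrt (real n)"
  let ?E = "\<lambda>n. {\<omega> \<in> space frog_space. ereal_of_enat (min (T 0 (?m n) \<omega>) (T 0 (- ?m n) \<omega>)) \<ge> ereal (?s n)}"
  have E_le: "measure frog_space (?E n)
      \<le> measure frog_space {\<omega> \<in> space frog_space. real (card (B (?s n - 1) \<omega>)) \<le> ?K n}" for n
  proof (rule measure_mono_on_unit_steps)
    show "?E n \<inter> unit_steps \<subseteq> {\<omega> \<in> space frog_space. real (card (B (?s n - 1) \<omega>)) \<le> ?K n}"
    proof
      fix \<omega> assume \<omega>: "\<omega> \<in> ?E n \<inter> unit_steps"
      then have "int (card (B (?s n - 1) \<omega>)) \<le> 2 * ?m n"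
        using assms(1)
        by (intro card_B_le_if_T_ge[of _ _ _ "?s n"]) (auto simp: ereal_of_enat_min zero_le_mult_iff)
      then have "real (card (B (?s n - 1) \<omega>)) \<le> 2 * real_of_int (?m n)"
        by (metis of_int_le_iff of_int_mult of_int_numeral of_int_of_nat_eq)
      also have "\<dots> \<le> ?K n"
        by linarith
      finally show "\<omega> \<in> {\<omega> \<in> space frog_space. real (card (B (?s n - 1) \<omega>)) \<le> ?K n}"
        by (simp add: space_frog_space)
    qed
  qed (rule card_B_le_sets)
  have rate: "64 * \<eta>^2 \<le> 2 * A * \<eta> / (decay_rate / 2)"
  proof -
    have "64 * \<eta>^2 = 2 * (32 * (decay_rate / 2) * \<eta>) * \<eta> / (decay_rate / 2)"
      by (simp add: decay_rate_def power2_eq_square)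
    also have "\<dots> \<le> 2 * A * \<eta> / (decay_rate / 2)"
      using assms by (intro divide_right_mono mult_right_mono) (auto simp: decay_rate_def)
    finally show ?thesis .
  qed
  have "\<forall>\<^sub>F n in sequentially. 0 < ?K n \<and> 8 * (?K n)^2 \<le> ?s n - 1"
    using eventually_ge_at_top[of "nat \<lceil>1 / (32 * \<eta>^2)\<rceil>"] eventually_ge_at_top[of "1::nat"]
  proof eventually_elim
    case (elim n)
    have "1 \<le> 32 * \<eta>^2 * real n"
      using elim(1) assms(1) by (simp add: field_simps)
    moreover have "64 * \<eta>^2 * real n \<le> ?s n"
      using mult_right_mono[OF rate, of "real n"] by (simp add: algebra_simps)
    ultimately show ?case
      using assms(1) elim(2) by (simp add: power_mult_distrib)
  qed
  moreover have "((\<lambda>n. (?K n + 1) * exp (- (decay_rate * (?s n - 1) / ?K n)) / exp (- A * sqrt (real n)))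
      \<longlongrightarrow> 0) sequentially"
    using assms(1,2) unfolding decay_rate_def by real_asymp
  ultimately have "\<forall>\<^sub>F n in sequentially.
      measure frog_space {\<omega> \<in> space frog_space. real (card (B (?s n - 1) \<omega>)) \<le> ?K n}
        \<le> exp (- A * sqrt (real n))"
    by (rule eventually_measure_card_B_le[where K = ?K and t = "\<lambda>n. ?s n - 1"])
  then have "\<forall>\<^sub>F n in sequentially. measure frog_space (?E n) \<le> exp (- A * sqrt (real n))"
    by eventually_elim (rule order_trans[OF E_le])
  then show ?thesis
    using T_min_ge_sets by simp
qed

theorem lemma2p6:
  shows "\<exists>c::real. 0 < c \<and> c < 1/64 \<and>
    (\<forall>\<delta>::real. \<forall>A::real. \<delta> > 0 \<longrightarrow> A \<ge> 4 * c * sqrt \<delta> \<longrightarrow>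
       (\<forall>\<^sub>F n in sequentially.
          {\<omega> \<in> space frog_space. real (card (B (\<delta> * real n) \<omega>)) \<le> c * \<delta> * sqrt (real n) / A}
            \<in> sets frog_space \<and>
          measure frog_space
            {\<omega> \<in> space frog_space. real (card (B (\<delta> * real n) \<omega>)) \<le> c * \<delta> * sqrt (real n) / A}
            \<le> exp (- A * sqrt (real n)))) \<and>
    (\<forall>\<eta>::real. \<forall>A::real. \<eta> > 0 \<longrightarrow> A > 0 \<longrightarrow> A \<ge> 32 * c * \<eta> \<longrightarrow>
       (\<forall>\<^sub>F n in sequentially.
          {\<omega> \<in> space frog_space.
             ereal_of_enat (min (T 0 \<lfloor>\<eta> * sqrt (real n)\<rfloor> \<omega>) (T 0 (- \<lfloor>\<eta> * sqrt (real n)\<rfloor>) \<omega>))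
               \<ge> ereal (2 * A * \<eta> * real n / c)} \<in> sets frog_space \<and>
          measure frog_space
            {\<omega> \<in> space frog_space.
             ereal_of_enat (min (T 0 \<lfloor>\<eta> * sqrt (real n)\<rfloor> \<omega>) (T 0 (- \<lfloor>\<eta> * sqrt (real n)\<rfloor>) \<omega>))
               \<ge> ereal (2 * A * \<eta> * real n / c)}
            \<le> exp (- A * sqrt (real n))))"
  by (intro exI[of _ "decay_rate / 2"] conjI allI impI eventually_measure_card_B_small eventually_measure_T_large)
     (simp_all add: decay_rate_def)

end
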